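(* Let $M\in\mathbb{R}^{n\times n}$ be a P$_s$-matrix all of whose entries are nonnegative, let $q\in\mathbb{R}^n$, and let $\theta:=\{i\in\{1,\dots,n\}:q_i<0\}$. If $|\theta|\le s$, then $\mathrm{sol}(M,q)\cap S$ is nonempty and contains exactly one element $x^*$ with $\mathrm{supp}(x^* )\subseteq\theta$.
   Context: A P$_s$-matrix is a square matrix all of whose principal minors of order up to $s$ are positive. $\mathrm{sol}(M,q)=\{x: x\ge0,\ Mx+q\ge0,\ \langle x,Mx+q\rangle=0\}$; $S=\{x\in\mathbb{R}^n:\|x\|_0\le s\}$ with $\|x\|_0$ the number of nonzero entries; $\mathrm{supp}(x)=\{i:x_i\ne0\}$. *)

theory Defs
  imports "HOL-Analysis.Analysis"
begin

definition principal_minor :: "real^'n^'n \<Rightarrow> 'n set \<Rightarrow> real" where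
  "principal_minor M I =
     (\<Sum>p\<in>{p. p permutes I}. of_int (sign p) * (\<Prod>i\<in>I. M $ i $ p i))"

definition P_s_matrix :: "nat \<Rightarrow> real^'n^'n \<Rightarrow> bool" where
  "P_s_matrix s M \<longleftrightarrow>
     (\<forall>I::'n set. 0 < card I \<and> card I \<le> s \<longrightarrow> principal_minor M I > 0)"

definition lcp_sol :: "real^'n^'n \<Rightarrow> real^'n \<Rightarrow> (real^'n) set" where
  "lcp_sol M q = {x. (\<forall>i. 0 \<le> x $ i) \<and> (\<forall>i. 0 \<le> (M *v x + q) $ i)
                     \<and> x \<bullet> (M *v x + q) = 0}"

definition supp :: "real^'n \<Rightarrow> 'n set" where
  "supp x = {i. x $ i \<noteq> 0}"

definition sparse_set :: "nat \<Rightarrow> (real^'n) set" where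
  "sparse_set s = {x. card (supp x) \<le> s}"

end

theory Submission
  imports Defs
begin

(* Existence needs only M >= 0 and M_ii > 0 for i in theta (the principal minors of order one):
   the projected Jacobi map x |-> max(0, x_j - (M x + q)_j / M_jj) sends a box into itself, and
   a Brouwer fixed point of it solves the LCP; nonnegativity of M forces its support into theta.
   For uniqueness, the difference d of two solutions supported in theta has at most s nonzero
   entries and satisfies d_i (M d)_i <= 0.  With the nonnegative weights l_i = -(M d)_i / d_i,
   d lies in the kernel of the principal submatrix of M + diag l on supp d; but shifting the
   diagonal by nonnegative amounts keeps principal minors positive (the minor is affine in each
   diagonal entry, with the smaller minor as slope), so d = 0. *)

definition diag_mat :: "real^'n \<Rightarrow> real^'n^'n" where
  "diag_mat l = (\<chi> i j. if i = j then l $ i else 0)"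

lemma diag_mat_nth [simp]: "diag_mat l $ i $ j = (if i = j then l $ i else 0)"
  by (simp add: diag_mat_def)

lemma diag_mat_add: "diag_mat (l + m) = diag_mat l + diag_mat m"
  by (simp add: vec_eq_iff)

lemma diag_mat_mult_vec_nth [simp]: "(diag_mat l *v x) $ i = l $ i * x $ i"
  by (simp add: matrix_vector_mult_def if_distrib if_distribR cong: if_cong)

lemma principal_minor_cong:
  assumes "\<And>i j. i \<in> J \<Longrightarrow> j \<in> J \<Longrightarrow> A $ i $ j = B $ i $ j"
  shows "principal_minor A J = principal_minor B J"
  unfolding principal_minor_def
  by (intro sum.cong refl arg_cong2[where f="(*)"] prod.cong) (auto simp: assms permutes_in_image)

lemma principal_minor_empty [simp]: "principal_minor A {} = 1"
  by (simp add: principal_minor_def)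

lemma principal_minor_singleton [simp]: "principal_minor A {i} = A $ i $ i"
  by (simp add: principal_minor_def)

lemma permutes_fixing_eq:
  assumes "a \<in> J"
  shows "{p. p permutes J \<and> p a = a} = {p. p permutes (J - {a})}"
proof safe
  fix p assume "p permutes J" "p a = a"
  then show "p permutes (J - {a})"
    by (auto intro: permutes_superset)
next
  fix p assume p: "p permutes (J - {a})"
  then show "p permutes J" by (rule permutes_subset) auto
  show "p a = a" using p by (rule permutes_not_in) simp
qed

lemma principal_minor_add_diag_axis:
  assumes "a \<in> J"
  shows "principal_minor (A + diag_mat (axis a c)) J
       = principal_minor A J + c * principal_minor A (J - {a})"
proof -
  let ?R = "\<lambda>p. \<Prod>i\<in>J - {a}. A $ i $ p i"
  have "(\<Prod>i\<in>J. (A + diag_mat (axis a c)) $ i $ p i)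
      = (\<Prod>i\<in>J. A $ i $ p i) + (if p a = a then c else 0) * ?R p" for p
  proof -
    have "(\<Prod>i\<in>J - {a}. (A + diag_mat (axis a c)) $ i $ p i) = ?R p"
      by (intro prod.cong) (auto simp: axis_def)
    then show ?thesis
      using assms by (simp add: prod.remove[of J a] axis_def algebra_simps)
  qed
  then have "principal_minor (A + diag_mat (axis a c)) J = principal_minor A J
      + (\<Sum>p | p permutes J. of_int (sign p) * ((if p a = a then c else 0) * ?R p))"
    unfolding principal_minor_def by (simp add: algebra_simps sum.distrib)
  also have "(\<Sum>p | p permutes J. of_int (sign p) * ((if p a = a then c else 0) * ?R p))
      = (\<Sum>p | p permutes J \<and> p a = a. c * (of_int (sign p) * ?R p))"
    by (simp add: sum.inter_filter[symmetric] finite_permutations if_distrib if_distribR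
        algebra_simps cong: if_cong)
  also have "\<dots> = c * principal_minor A (J - {a})"
    unfolding principal_minor_def permutes_fixing_eq[OF assms] by (simp add: sum_distrib_left)
  finally show ?thesis .
qed

lemma principal_minor_add_diag_pos:
  fixes A :: "real^'n^'n"
  assumes minors: "\<And>I. I \<subseteq> J \<Longrightarrow> 0 < principal_minor A I" and l: "\<And>i. 0 \<le> l $ i"
  shows "0 < principal_minor (A + diag_mat l) J"
proof -
  have "0 < principal_minor (A + diag_mat l) I"
    if "finite F" "{i. l $ i \<noteq> 0} \<subseteq> F" "\<forall>i. 0 \<le> l $ i" "I \<subseteq> J" for F l I
    using that
  proof (induction F arbitrary: l I rule: finite_induct)
    case empty
    then have "A + diag_mat l = A" by (auto simp: vec_eq_iff)
    then show ?case using empty.prems minors by simp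
  next
    case (insert a F)
    define l' where "l' = l - axis a (l $ a)"
    have l': "{i. l' $ i \<noteq> 0} \<subseteq> F" "\<forall>i. 0 \<le> l' $ i"
      using insert.prems by (auto simp: l'_def axis_def)
    have split: "A + diag_mat l = (A + diag_mat l') + diag_mat (axis a (l $ a))"
      by (simp add: l'_def add.assoc flip: diag_mat_add)
    show ?case
    proof (cases "a \<in> I")
      case True
      have "0 < principal_minor (A + diag_mat l') I"
        using insert.IH[OF l'] insert.prems(3) by blast
      moreover have "0 < principal_minor (A + diag_mat l') (I - {a})"
        using insert.IH[OF l'] insert.prems(3) by (meson Diff_subset subset_trans)
      moreover have "0 \<le> l $ a" using insert.prems(2) by simp
      ultimately show ?thesis
        unfolding split principal_minor_add_diag_axis[OF True]
        by (intro add_pos_nonneg mult_nonneg_nonneg) (auto intro: less_imp_le)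
    next
      case False
      have "principal_minor (A + diag_mat l) I = principal_minor (A + diag_mat l') I"
        using False by (intro principal_minor_cong) (auto simp: l'_def axis_def)
      with insert.IH[OF l'] insert.prems(3) show ?thesis by simp
    qed
  qed
  from this[of UNIV l J] show ?thesis using l by simp
qed

lemma det_principal_embedding:
  fixes A :: "real^'n^'n"
  shows "det (\<chi> i j. if i \<in> J \<and> j \<in> J then A $ i $ j else if i = j then 1 else 0)
       = principal_minor A J"
proof -
  let ?N = "(\<chi> i j. if i \<in> J \<and> j \<in> J then A $ i $ j else if i = j then 1 else 0) :: real^'n^'n"
  have vanish: "(\<Prod>i\<in>UNIV. ?N $ i $ p i) = 0" if "p permutes UNIV" "\<not> p permutes J" for p
  proof -
    have "\<not> (\<forall>i. i \<notin> J \<longrightarrow> p i = i)"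
      using that permutes_superset[of p UNIV J] by auto
    then obtain i where "i \<notin> J" "p i \<noteq> i" by blast
    then show ?thesis by (intro prod_zero) auto
  qed
  have restrict: "(\<Prod>i\<in>UNIV. ?N $ i $ p i) = (\<Prod>i\<in>J. A $ i $ p i)" if "p permutes J" for p
    by (rule prod.mono_neutral_cong_right) (use that in \<open>auto simp: permutes_not_in permutes_in_image\<close>)
  have "det ?N = (\<Sum>p\<in>{p. p permutes J}. of_int (sign p) * (\<Prod>i\<in>UNIV. ?N $ i $ p i))"
    unfolding det_def
  proof (rule sum.mono_neutral_right)
    show "\<forall>p\<in>{p. p permutes UNIV} - {p. p permutes J}.
        of_int (sign p) * (\<Prod>i\<in>UNIV. ?N $ i $ p i) = 0"
      using vanish by simp
  qed (auto simp: finite_permutations intro: permutes_subset)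
  also have "\<dots> = principal_minor A J"
    unfolding principal_minor_def by (intro sum.cong refl) (simp only: mem_Collect_eq restrict)
  finally show ?thesis .
qed

lemma principal_minor_nonzero_kernel:
  fixes A :: "real^'n^'n"
  assumes "principal_minor A J \<noteq> 0" and "supp d \<subseteq> J" and "\<forall>i\<in>J. (A *v d) $ i = 0"
  shows "d = 0"
proof -
  define N :: "real^'n^'n"
    where "N = (\<chi> i j. if i \<in> J \<and> j \<in> J then A $ i $ j else if i = j then 1 else 0)"
  have d_off: "d $ j = 0" if "j \<notin> J" for j
    using assms(2) that by (auto simp: supp_def)
  have "(N *v d) $ i = 0" for i
  proof (cases "i \<in> J")
    case True
    have "(N *v d) $ i = (\<Sum>j\<in>UNIV. A $ i $ j * d $ j)"
      unfolding N_def matrix_vector_mult_def vec_lambda_beta using True d_off by (intro sum.cong refl) auto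
    then show ?thesis using True assms(3) by (simp add: matrix_vector_mult_def)
  next
    case False
    have "(N *v d) $ i = (\<Sum>j\<in>UNIV. if j = i then d $ j else 0)"
      unfolding N_def matrix_vector_mult_def vec_lambda_beta using False by (intro sum.cong refl) auto
    then show ?thesis using False d_off by simp
  qed
  moreover have "det N \<noteq> 0"
    using assms(1) det_principal_embedding[of J A] by (simp add: N_def)
  then have "inj ((*v) N)"
    using det_nz_iff_inj[OF matrix_vector_mul_linear[of N]] by simp
  ultimately show ?thesis
    by (metis injD matrix_vector_mult_0_right vec_eq_iff zero_index)
qed

lemma P_s_matrix_diag_pos:
  assumes "P_s_matrix s M" and "1 \<le> s"
  shows "0 < M $ i $ i"
  using spec[OF assms(1)[unfolded P_s_matrix_def], of "{i}"] assms(2) by simp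

lemma P_s_matrix_sign_reversal:
  assumes P: "P_s_matrix s M" and sparse: "card (supp d) \<le> s"
    and reversal: "\<forall>i. d $ i * (M *v d) $ i \<le> 0"
  shows "d = 0"
proof -
  \<comment> \<open>\<open>l $ i = 0\<close> off the support, by division by zero\<close>
  define l where "l = (\<chi> i. - (M *v d) $ i / d $ i)"
  have "0 \<le> l $ i" for i
  proof -
    have "l $ i = - (d $ i * (M *v d) $ i) / (d $ i)\<^sup>2"
      by (cases "d $ i = 0") (simp_all add: l_def power2_eq_square)
    then show ?thesis using reversal[rule_format, of i] by (simp add: divide_nonpos_nonneg)
  qed
  moreover have "0 < principal_minor M I" if "I \<subseteq> supp d" for I
  proof (cases "I = {}")
    case False
    have "card I \<le> s" using sparse card_mono[OF finite that] by linarith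
    with False P show ?thesis by (simp add: P_s_matrix_def card_gt_0_iff)
  qed simp
  ultimately have "0 < principal_minor (M + diag_mat l) (supp d)"
    by (intro principal_minor_add_diag_pos)
  moreover have "((M + diag_mat l) *v d) $ i = 0" if "i \<in> supp d" for i
    using that by (simp add: l_def supp_def matrix_vector_mult_add_rdistrib)
  ultimately show ?thesis
    by (intro principal_minor_nonzero_kernel[of "M + diag_mat l" "supp d"]) auto
qed

lemma lcp_sol_complementary:
  assumes "x \<in> lcp_sol M q"
  shows "x $ i * (M *v x + q) $ i = 0"
proof -
  have "\<forall>i. 0 \<le> x $ i * (M *v x + q) $ i" and "(\<Sum>i\<in>UNIV. x $ i * (M *v x + q) $ i) = 0"
    using assms by (simp_all add: lcp_sol_def inner_vec_def)
  then show ?thesis by (simp add: sum_nonneg_eq_0_iff)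
qed

lemma lcp_sol_diff_sign_reversal:
  assumes x: "x \<in> lcp_sol M q" and y: "y \<in> lcp_sol M q"
  shows "(y - x) $ i * (M *v (y - x)) $ i \<le> 0"
proof -
  have "(y - x) $ i * (M *v (y - x)) $ i = - (y $ i * (M *v x + q) $ i) - x $ i * (M *v y + q) $ i"
    using lcp_sol_complementary[OF x, of i] lcp_sol_complementary[OF y, of i]
    by (simp add: matrix_vector_mult_diff_distrib algebra_simps)
  also have "\<dots> \<le> 0"
  proof -
    have "0 \<le> y $ i * (M *v x + q) $ i" and "0 \<le> x $ i * (M *v y + q) $ i"
      using x y unfolding lcp_sol_def by (auto intro!: mult_nonneg_nonneg simp del: vector_add_component)
    then show ?thesis by linarith
  qed
  finally show ?thesis .
qed

(* The projected Jacobi step x_j - (M x + q)_j / M_jj, clipped at 0.  Written with the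
   numerator over M_jj so that division by zero makes the component 0 when M_jj = 0. *)
definition lcp_jacobi :: "real^'n^'n \<Rightarrow> real^'n \<Rightarrow> real^'n \<Rightarrow> real^'n" where
  "lcp_jacobi M q x = (\<chi> j. max 0 ((M $ j $ j * x $ j - (M *v x + q) $ j) / M $ j $ j))"

lemma lcp_jacobi_nonneg: "0 \<le> lcp_jacobi M q x $ j"
  by (simp add: lcp_jacobi_def)

lemma diag_mult_le_mult_vec:
  fixes M :: "real^'n^'n"
  assumes "\<forall>i j. 0 \<le> M $ i $ j" and "\<forall>i. 0 \<le> x $ i"
  shows "M $ j $ j * x $ j \<le> (M *v x) $ j"
  unfolding matrix_vector_mult_def
  using member_le_sum[of j UNIV "\<lambda>k. M $ j $ k * x $ k"] assms by simp

lemma lcp_jacobi_le: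
  assumes "\<forall>i j. 0 \<le> M $ i $ j" and "\<forall>i. 0 \<le> x $ i"
  shows "lcp_jacobi M q x $ j \<le> max 0 (- q $ j / M $ j $ j)"
proof (cases "M $ j $ j = 0")
  case False
  then have "0 < M $ j $ j" using assms(1) by (simp add: order_less_le)
  moreover have "M $ j $ j * x $ j - (M *v x + q) $ j \<le> - q $ j"
    using diag_mult_le_mult_vec[OF assms, of j] by simp
  ultimately have "(M $ j $ j * x $ j - (M *v x + q) $ j) / M $ j $ j \<le> - q $ j / M $ j $ j"
    by (intro divide_right_mono) auto
  then show ?thesis
    unfolding lcp_jacobi_def vec_lambda_beta by (rule max.mono[OF order_refl])
qed (simp add: lcp_jacobi_def)

lemma lcp_jacobi_fixpoint_sol:
  assumes M: "\<forall>i j. 0 \<le> M $ i $ j" and diag: "\<forall>i. q $ i < 0 \<longrightarrow> 0 < M $ i $ i"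
    and fixed: "lcp_jacobi M q x = x"
  shows "x \<in> lcp_sol M q"
proof -
  define w where "w = M *v x + q"
  have x_comp: "x $ j = max 0 ((M $ j $ j * x $ j - w $ j) / M $ j $ j)" for j
  proof -
    have "x $ j = lcp_jacobi M q x $ j" using fixed by simp
    then show ?thesis by (simp only: lcp_jacobi_def vec_lambda_beta w_def)
  qed
  have x_nonneg: "\<forall>j. 0 \<le> x $ j" by (metis fixed lcp_jacobi_nonneg)
  have w_comp: "0 \<le> w $ j \<and> x $ j * w $ j = 0" for j
  proof (cases "M $ j $ j = 0")
    case True
    then have "x $ j = 0" and "0 \<le> q $ j"
      using x_comp[of j] diag[rule_format, of j] by (auto simp: not_less[symmetric])
    moreover have "0 \<le> (M *v x) $ j"
      unfolding matrix_vector_mult_def using M x_nonneg by (simp add: sum_nonneg)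
    ultimately show ?thesis by (simp add: w_def)
  next
    case False
    then have "0 < M $ j $ j" using M by (simp add: order_less_le)
    then show ?thesis
      using x_comp[of j] by (cases "0 < x $ j") (auto simp: field_simps max_def split: if_splits)
  qed
  then have "x \<bullet> w = 0"
    unfolding inner_vec_def inner_real_def by (intro sum.neutral) (simp add: mult.commute)
  then show ?thesis using x_nonneg w_comp by (simp add: lcp_sol_def w_def)
qed

lemma lcp_jacobi_fixpoint_supp:
  assumes "\<forall>i j. 0 \<le> M $ i $ j" and "lcp_jacobi M q x = x"
  shows "supp x \<subseteq> {i. q $ i < 0}"
proof
  fix j assume "j \<in> supp x"
  have x_nonneg: "\<forall>i. 0 \<le> x $ i" by (metis assms(2) lcp_jacobi_nonneg)
  then have "0 < x $ j" using \<open>j \<in> supp x\<close> by (simp add: supp_def order_less_le)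
  moreover have "x $ j \<le> max 0 (- q $ j / M $ j $ j)"
    using lcp_jacobi_le[OF assms(1) x_nonneg, of q j] assms(2) by simp
  ultimately have "0 < - q $ j / M $ j $ j" by simp
  then show "j \<in> {i. q $ i < 0}"
    using assms(1)[rule_format, of j j] by (auto simp: divide_less_0_iff)
qed

lemma lcp_sol_exists_nonneg:
  fixes M :: "real^'n^'n"
  assumes M: "\<forall>i j. 0 \<le> M $ i $ j" and diag: "\<forall>i. q $ i < 0 \<longrightarrow> 0 < M $ i $ i"
  shows "\<exists>x\<in>lcp_sol M q. supp x \<subseteq> {i. q $ i < 0}"
proof -
  define u :: "real^'n" where "u = (\<chi> j. max 0 (- q $ j / M $ j $ j))"
  have "lcp_jacobi M q x \<in> cbox 0 u" if "x \<in> cbox 0 u" for x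
  proof -
    have "\<forall>j. 0 \<le> lcp_jacobi M q x $ j" by (simp add: lcp_jacobi_nonneg)
    moreover have "\<forall>i. 0 \<le> x $ i" using that by (simp add: mem_box_cart)
    ultimately show ?thesis using lcp_jacobi_le[OF M] by (simp add: mem_box_cart u_def)
  qed
  then have maps: "lcp_jacobi M q \<in> cbox 0 u \<rightarrow> cbox 0 u" by blast
  have cont: "continuous_on (cbox 0 u) (lcp_jacobi M q)"
    unfolding lcp_jacobi_def divide_inverse
    by (intro continuous_intros matrix_vector_mult_linear_continuous_on)
  have nonempty: "cbox 0 u \<noteq> {}"
    by (auto simp: u_def interval_eq_empty_cart)
  obtain x where "x \<in> cbox 0 u" "lcp_jacobi M q x = x"
    by (rule brouwer[OF compact_cbox convex_box(1) nonempty cont maps])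
  then show ?thesis
    using lcp_jacobi_fixpoint_sol[OF M diag] lcp_jacobi_fixpoint_supp[OF M] by blast
qed

theorem theorem4p3:
  fixes M :: "real^'n^'n" and q :: "real^'n" and s :: nat
  assumes "P_s_matrix s M"
    and "\<forall>i j. 0 \<le> M $ i $ j"
    and "card {i. q $ i < 0} \<le> s"
  shows "lcp_sol M q \<inter> sparse_set s \<noteq> {}
    \<and> (\<exists>!x. x \<in> lcp_sol M q \<inter> sparse_set s \<and> supp x \<subseteq> {i. q $ i < 0})"
proof -
  let ?\<theta> = "{i. q $ i < 0}"
  have sparse: "card (supp z) \<le> s" if "supp z \<subseteq> ?\<theta>" for z
    using card_mono[OF finite that] assms(3) by linarith
  have "\<forall>i. q $ i < 0 \<longrightarrow> 0 < M $ i $ i"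
  proof (intro allI impI)
    fix i assume "q $ i < 0"
    then have "1 \<le> s" using card_mono[of ?\<theta> "{i}"] assms(3) by simp
    then show "0 < M $ i $ i" by (rule P_s_matrix_diag_pos[OF assms(1)])
  qed
  then obtain x where x: "x \<in> lcp_sol M q" "supp x \<subseteq> ?\<theta>"
    using lcp_sol_exists_nonneg[OF assms(2)] by blast
  have unique: "y = x" if y: "y \<in> lcp_sol M q" "supp y \<subseteq> ?\<theta>" for y
  proof -
    have "supp (y - x) \<subseteq> ?\<theta>" using x(2) y(2) by (force simp: supp_def)
    then have "y - x = 0"
      using P_s_matrix_sign_reversal[OF assms(1) sparse] lcp_sol_diff_sign_reversal[OF x(1) y(1)]
      by blast
    then show ?thesis by simp
  qed
  have "x \<in> sparse_set s" using sparse[OF x(2)] by (simp add: sparse_set_def)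
  with x unique show ?thesis by blast
qed

end
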